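(* Let $\mathcal{S}$ be a finite state space (possibly containing terminal states), let $\pi=\pi_d$ be a policy, and let $\mathbf{P}^{\pi}\in\mathbb{R}^{|\mathcal{S}|\times|\mathcal{S}|}$ be the induced state-transition matrix, $\mathbf{P}^{\pi}(s,s')$ being the probability of moving from $s$ to $s'$ under $\pi$, with the rows of terminal states set to zero. Let $\gamma\in(0,1)$ and $\lambda>0$. Define the successor representation $\mathbf{\Psi}^\pi=(\mathbf{I}-\gamma\mathbf{P}^\pi)^{-1}$ and the default representation $\mathbf{Z}=\big[\operatorname{diag}(\exp(-\mathbf{r}/\lambda))-\mathbf{P}^{\pi_d}\big]^{-1}$, where $\mathbf{r}\in\mathbb{R}^{|\mathcal{S}|}$ is the vector of state rewards and $\exp$ acts entrywise. Suppose the reward function is constant and negative: $r(s)=r(s')<0$ for all $s,s'\in\mathcal{S}$. Then $\mathbf{\Psi}^\pi$ and $\mathbf{Z}$ share the same set of eigenvectors. Furthermore, if $\mathbf{\Psi}^\pi$ and $\mathbf{Z}$ are symmetric, then, ordering the eigenvectors of each matrix by their corresponding eigenvalues, the $i$-th eigenvectors of $\mathbf{\Psi}^\pi$ and $\mathbf{Z}$ are equal, and the $i$-th eigenvalues $\mu_{\mathrm{SR},i}$ of $\mathbf{\Psi}^\pi$ and $\mu_{\mathrm{DR},i}$ of $\mathbf{Z}$ satisfy $$\mu_{\mathrm{SR},i}=\Big[\gamma\Big(\mu_{\mathrm{DR},i}^{-1}-\exp\big(-r(s)/\lambda\big)+\gamma^{-1}\Big)\Big]^{-1}.$$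
   Context: Setting: a Markov decision process with finite state space $\mathcal{S}$, finite action space $\mathcal{A}$, transition function $p$, reward function $r:\mathcal{S}\to\mathbb{R}$, and a default policy $\pi_d$ assigning nonzero probability to every state-action pair. The transition matrix induced by a policy has rows for terminal states set to all zeros (and rows of non-terminal states summing to one). $\gamma$ is the discount factor of the successor representation and $\lambda>0$ is the relative importance of the deviation (KL) cost in the linearly solvable MDP defining the default representation. *)

theory Defs
  imports "HOL-Analysis.Analysis"
begin

definition is_dist :: "('b::finite \<Rightarrow> real) \<Rightarrow> bool" where
  "is_dist f \<longleftrightarrow> (\<forall>x. 0 \<le> f x) \<and> (\<Sum>x\<in>UNIV. f x) = 1"

definition trans_matrix ::
  "('s::finite \<Rightarrow> 'a::finite \<Rightarrow> 's \<Rightarrow> real) \<Rightarrow> 's set \<Rightarrow> ('s \<Rightarrow> 'a \<Rightarrow> real) \<Rightarrow> real^'s^'s" where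
  "trans_matrix p T pol = (\<chi> s s'. if s \<in> T then 0 else (\<Sum>a\<in>UNIV. pol s a * p s a s'))"

definition SR :: "real \<Rightarrow> real^'s^'s \<Rightarrow> real^'s^'s" where
  "SR \<gamma> P = matrix_inv (mat 1 - \<gamma> *\<^sub>R P)"

definition DR :: "real \<Rightarrow> ('s::finite \<Rightarrow> real) \<Rightarrow> real^'s^'s \<Rightarrow> real^'s^'s" where
  "DR lam r P = matrix_inv ((\<chi> i j. if i = j then exp (- r i / lam) else 0) - P)"

text \<open>Complexification of a real matrix / vector (eigenvectors may be complex in general).\<close>
definition cmat :: "real^'n^'m \<Rightarrow> complex^'n^'m" where
  "cmat A = (\<chi> i j. complex_of_real (A $ i $ j))"

definition is_eigvec_c :: "complex^'n^'n \<Rightarrow> complex^'n \<Rightarrow> bool" where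
  "is_eigvec_c A v \<longleftrightarrow> v \<noteq> 0 \<and> (\<exists>\<mu>. A *v v = \<mu> *s v)"

definition is_eigpair :: "real^'n^'n \<Rightarrow> real^'n \<Rightarrow> real \<Rightarrow> bool" where
  "is_eigpair A v \<mu> \<longleftrightarrow> v \<noteq> 0 \<and> A *v v = \<mu> *s v"

end

theory Submission imports Defs begin

text \<open>With \<open>c = exp (-r/\<lambda>) > 1\<close>, both \<open>\<Psi> = (I - \<gamma>P)\<^sup>-\<^sup>1\<close> and \<open>Z = (cI - P)\<^sup>-\<^sup>1\<close> are
  inverses of affine functions of the same substochastic matrix \<open>P\<close>. Every eigenvalue of \<open>P\<close>
  satisfies \<open>|x| \<le> 1\<close> (look at a largest entry of an eigenvector), so both matrices are
  invertible, their eigenvectors are exactly those of \<open>P\<close>, and an eigenvalue \<open>x\<close> of \<open>P\<close>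
  becomes \<open>1/(1 - \<gamma>x)\<close> for \<open>\<Psi>\<close> and \<open>1/(c - x)\<close> for \<open>Z\<close>. Eliminating \<open>x\<close> gives the stated
  relation, which is increasing because \<open>1/(c - x) > 0\<close> and \<open>\<gamma>x < 1\<close>.\<close>

lemma matrix_inv_mult:
  fixes A :: "'a::field^'n^'n"
  assumes "invertible A"
  shows "A ** matrix_inv A = mat 1" "matrix_inv A ** A = mat 1"
proof -
  have "\<exists>A'. A ** A' = mat 1 \<and> A' ** A = mat 1"
    using assms unfolding invertible_def by blast
  then have "A ** matrix_inv A = mat 1 \<and> matrix_inv A ** A = mat 1"
    unfolding matrix_inv_def by (rule someI_ex)
  then show "A ** matrix_inv A = mat 1" "matrix_inv A ** A = mat 1" by auto
qed

lemma matrix_vector_mult_scaleR_mat_diff: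
  fixes P :: "'a::real_field^'n^'n"
  shows "(a *\<^sub>R mat 1 - b *\<^sub>R P) *v x = of_real a *s x - of_real b *s (P *v x)"
proof -
  have "((a *\<^sub>R mat 1 - b *\<^sub>R P) *v x) $ i = (of_real a *s x - of_real b *s (P *v x)) $ i" for i
  proof -
    have "((a *\<^sub>R mat 1 - b *\<^sub>R P) *v x) $ i
        = (\<Sum>j\<in>UNIV. (if i = j then a *\<^sub>R x $ j else 0) - b *\<^sub>R (P $ i $ j * x $ j))"
      by (simp add: matrix_vector_mult_def mat_def left_diff_distrib if_distrib if_distribR
          cong: if_cong)
    also have "\<dots> = (of_real a *s x - of_real b *s (P *v x)) $ i"
      by (simp add: sum_subtractf scaleR_sum_right[symmetric] sum_distrib_left
          matrix_vector_mult_def scaleR_conv_of_real)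
    finally show ?thesis .
  qed
  then show ?thesis by (simp add: vec_eq_iff)
qed

lemma eigenvector_inverse_pair:
  fixes M N :: "'a::field^'n^'n"
  assumes "M ** N = mat 1" "N ** M = mat 1" "v \<noteq> 0"
  shows "N *v v = \<mu> *s v \<longleftrightarrow> M *v v = inverse \<mu> *s v"
proof -
  have inverse_eigenvalue: "M' *v v = inverse \<kappa> *s v"
    if "M' ** N' = mat 1" "N' *v v = \<kappa> *s v" for M' N' :: "'a^'n^'n" and \<kappa>
  proof -
    have "v = M' *v (N' *v v)" by (simp add: matrix_vector_mul_assoc that(1))
    also have "\<dots> = \<kappa> *s (M' *v v)" by (simp add: that(2) vector_scalar_commute)
    finally have v: "v = \<kappa> *s (M' *v v)" .
    with \<open>v \<noteq> 0\<close> have "\<kappa> \<noteq> 0" by auto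
    from arg_cong[OF v, of "(*s) (inverse \<kappa>)"] this show ?thesis
      by (simp add: vector_smult_assoc)
  qed
  show ?thesis
  proof
    assume "N *v v = \<mu> *s v"
    then show "M *v v = inverse \<mu> *s v" by (rule inverse_eigenvalue[OF assms(1)])
  next
    assume "M *v v = inverse \<mu> *s v"
    then have "N *v v = inverse (inverse \<mu>) *s v" by (rule inverse_eigenvalue[OF assms(2)])
    then show "N *v v = \<mu> *s v" by simp
  qed
qed

lemma eigenvector_inverse_affine:
  fixes P N :: "'a::real_field^'n^'n"
  assumes "(a *\<^sub>R mat 1 - b *\<^sub>R P) ** N = mat 1" "N ** (a *\<^sub>R mat 1 - b *\<^sub>R P) = mat 1"
    and "b \<noteq> 0" "v \<noteq> 0"
  shows "N *v v = \<mu> *s v \<longleftrightarrow> P *v v = ((of_real a - inverse \<mu>) / of_real b) *s v"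
proof -
  have "N *v v = \<mu> *s v \<longleftrightarrow> of_real a *s v - of_real b *s (P *v v) = inverse \<mu> *s v"
    using eigenvector_inverse_pair[OF assms(1,2,4)] by (simp add: matrix_vector_mult_scaleR_mat_diff)
  also have "\<dots> \<longleftrightarrow> P *v v = ((of_real a - inverse \<mu>) / of_real b) *s v"
    using \<open>b \<noteq> 0\<close> by (auto simp: vec_eq_iff field_simps)
  finally show ?thesis .
qed

lemma eigpair_matrix_inv_affine_iff:
  fixes P :: "real^'n^'n"
  assumes "invertible (a *\<^sub>R mat 1 - b *\<^sub>R P)" "b \<noteq> 0"
  shows "is_eigpair (matrix_inv (a *\<^sub>R mat 1 - b *\<^sub>R P)) v \<mu> \<longleftrightarrow> is_eigpair P v ((a - inverse \<mu>) / b)"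
  using eigenvector_inverse_affine[OF matrix_inv_mult[OF assms(1)] assms(2)]
  unfolding is_eigpair_def by auto

lemma cmat_mult: "cmat (X ** Y) = cmat X ** cmat Y"
  by (simp add: cmat_def matrix_matrix_mult_def vec_eq_iff)

lemma cmat_mat_1: "cmat (mat 1) = mat 1"
  by (simp add: cmat_def mat_def vec_eq_iff)

lemma cmat_scaleR_mat_diff: "cmat (a *\<^sub>R mat 1 - b *\<^sub>R P) = a *\<^sub>R mat 1 - b *\<^sub>R cmat P"
  by (simp add: cmat_def vec_eq_iff mat_def scaleR_conv_of_real[where 'a=complex])

lemma eigvec_c_matrix_inv_affine_iff:
  fixes P :: "real^'n^'n"
  assumes "invertible (a *\<^sub>R mat 1 - b *\<^sub>R P)" "b \<noteq> 0"
  shows "is_eigvec_c (cmat (matrix_inv (a *\<^sub>R mat 1 - b *\<^sub>R P))) v \<longleftrightarrow> is_eigvec_c (cmat P) v"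
proof (cases "v = 0")
  case False
  let ?M = "a *\<^sub>R mat 1 - b *\<^sub>R P"
  have "cmat ?M ** cmat (matrix_inv ?M) = mat 1" "cmat (matrix_inv ?M) ** cmat ?M = mat 1"
    unfolding cmat_mult[symmetric] matrix_inv_mult[OF assms(1)] cmat_mat_1 by simp_all
  note eig = eigenvector_inverse_affine[OF this[unfolded cmat_scaleR_mat_diff] assms(2) False]
  show ?thesis
  proof
    assume "is_eigvec_c (cmat (matrix_inv ?M)) v"
    then obtain \<mu> where "cmat (matrix_inv ?M) *v v = \<mu> *s v"
      unfolding is_eigvec_c_def by blast
    with eig False show "is_eigvec_c (cmat P) v"
      unfolding is_eigvec_c_def by blast
  next
    assume "is_eigvec_c (cmat P) v"
    then obtain x where x: "cmat P *v v = x *s v"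
      unfolding is_eigvec_c_def by blast
    have "(of_real a - inverse (inverse (of_real a - of_real b * x))) / of_real b = x"
      using \<open>b \<noteq> 0\<close> by simp
    with x have "cmat (matrix_inv ?M) *v v = inverse (of_real a - of_real b * x) *s v"
      unfolding eig by simp
    with False show "is_eigvec_c (cmat (matrix_inv ?M)) v"
      unfolding is_eigvec_c_def by blast
  qed
qed (simp add: is_eigvec_c_def)

definition substochastic :: "real^'n^'n \<Rightarrow> bool" where
  "substochastic P \<longleftrightarrow> (\<forall>i j. 0 \<le> P $ i $ j) \<and> (\<forall>i. (\<Sum>j\<in>UNIV. P $ i $ j) \<le> 1)"

lemma substochastic_trans_matrix:
  assumes "\<And>s a. is_dist (p s a)" "\<And>s. is_dist (pol s)"
  shows "substochastic (trans_matrix p T pol)"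
proof -
  have row_sum: "(\<Sum>j\<in>UNIV. \<Sum>a\<in>UNIV. pol i a * p i a j) = 1" for i
  proof -
    have "(\<Sum>j\<in>UNIV. \<Sum>a\<in>UNIV. pol i a * p i a j) = (\<Sum>a\<in>UNIV. pol i a * (\<Sum>j\<in>UNIV. p i a j))"
      by (subst sum.swap) (simp add: sum_distrib_left)
    also have "\<dots> = 1"
      using assms unfolding is_dist_def by simp
    finally show ?thesis .
  qed
  have "(\<Sum>j\<in>UNIV. trans_matrix p T pol $ i $ j) \<le> 1" for i
    unfolding trans_matrix_def using row_sum[of i] by (cases "i \<in> T") simp_all
  moreover have "0 \<le> trans_matrix p T pol $ i $ j" for i j
    using assms unfolding trans_matrix_def is_dist_def by (auto intro!: sum_nonneg)
  ultimately show ?thesis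
    unfolding substochastic_def by blast
qed

lemma substochastic_eigenvalue_abs_le:
  assumes "substochastic P" "is_eigpair P v x"
  shows "\<bar>x\<bar> \<le> 1"
proof -
  let ?m = "Max (range (\<lambda>j. \<bar>v $ j\<bar>))"
  have "?m \<in> range (\<lambda>j. \<bar>v $ j\<bar>)"
    by (rule Max_in) auto
  then obtain i where i: "?m = \<bar>v $ i\<bar>"
    by blast
  have le_max: "\<bar>v $ j\<bar> \<le> \<bar>v $ i\<bar>" for j
    unfolding i[symmetric] by (rule Max_ge) auto
  have "v \<noteq> 0" using assms(2) unfolding is_eigpair_def by blast
  then obtain k where "v $ k \<noteq> 0" by (auto simp: vec_eq_iff)
  with le_max[of k] have vi: "\<bar>v $ i\<bar> > 0" by linarith
  have "(P *v v) $ i = x * v $ i"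
    using assms(2) unfolding is_eigpair_def by simp
  then have "\<bar>x\<bar> * \<bar>v $ i\<bar> = \<bar>\<Sum>j\<in>UNIV. P $ i $ j * v $ j\<bar>"
    by (simp add: matrix_vector_mult_def abs_mult)
  also have "\<dots> \<le> (\<Sum>j\<in>UNIV. P $ i $ j * \<bar>v $ i\<bar>)"
    using assms(1) le_max unfolding substochastic_def
    by (intro order.trans[OF sum_abs] sum_mono) (simp add: abs_mult mult_left_mono)
  also have "\<dots> \<le> 1 * \<bar>v $ i\<bar>"
    using assms(1) unfolding substochastic_def sum_distrib_right[symmetric]
    by (intro mult_right_mono) auto
  finally show ?thesis using vi by simp
qed

lemma substochastic_invertible:
  assumes "substochastic P" "\<bar>b\<bar> < \<bar>a\<bar>"
  shows "invertible (a *\<^sub>R mat 1 - b *\<^sub>R P)"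
proof -
  have "x = 0" if "(a *\<^sub>R mat 1 - b *\<^sub>R P) *v x = 0" for x
  proof (rule ccontr)
    assume "x \<noteq> 0"
    from that have ax: "a *s x = b *s (P *v x)"
      by (simp add: matrix_vector_mult_scaleR_mat_diff)
    have "b \<noteq> 0"
    proof
      assume "b = 0"
      with ax have "a *s x = 0" by simp
      with \<open>x \<noteq> 0\<close> \<open>b = 0\<close> assms(2) show False by simp
    qed
    from arg_cong[OF ax, of "(*s) (inverse b)"] \<open>b \<noteq> 0\<close> have "P *v x = (a / b) *s x"
      by (simp add: vector_smult_assoc divide_inverse mult.commute)
    with \<open>x \<noteq> 0\<close> have "\<bar>a / b\<bar> \<le> 1"
      by (intro substochastic_eigenvalue_abs_le[OF assms(1)]) (simp add: is_eigpair_def)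
    with \<open>b \<noteq> 0\<close> assms(2) show False
      by (simp add: abs_divide divide_le_eq_1)
  qed
  then show ?thesis
    using invertible_left_inverse matrix_left_invertible_ker by blast
qed

lemma DR_constant_reward:
  assumes "\<And>s. exp (- r s / lam) = c"
  shows "DR lam r P = matrix_inv (c *\<^sub>R mat 1 - P)"
proof -
  have "(\<chi> i j. if i = j then exp (- r i / lam) else 0) = c *\<^sub>R mat 1"
    unfolding assms by (simp add: mat_def vec_eq_iff)
  then show ?thesis
    unfolding DR_def by simp
qed

locale substochastic_representations =
  fixes P :: "real^'n^'n" and \<gamma> c :: real
  assumes substochastic: "substochastic P"
    and gamma: "0 < \<gamma>" "\<gamma> < 1"
    and c_gt_1: "1 < c"
begin

abbreviation DR_const :: "real^'n^'n" where
  "DR_const \<equiv> matrix_inv (c *\<^sub>R mat 1 - P)"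

definition SR_eigenvalue :: "real \<Rightarrow> real" where
  "SR_eigenvalue \<nu> = inverse (\<gamma> * (inverse \<nu> - c + inverse \<gamma>))"

lemma SR_affine: "SR \<gamma> P = matrix_inv (1 *\<^sub>R mat 1 - \<gamma> *\<^sub>R P)"
  unfolding SR_def by simp

lemma DR_const_affine: "DR_const = matrix_inv (c *\<^sub>R mat 1 - 1 *\<^sub>R P)"
  by simp

lemma gamma_neq_0: "\<gamma> \<noteq> 0"
  using gamma by simp

lemma invertible_SR: "invertible (1 *\<^sub>R mat 1 - \<gamma> *\<^sub>R P)"
  using substochastic_invertible[OF substochastic, of \<gamma> 1] gamma by simp

lemma invertible_DR_const: "invertible (c *\<^sub>R mat 1 - 1 *\<^sub>R P)"
  using substochastic_invertible[OF substochastic, of 1 c] c_gt_1 by simp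

lemma eigvec_c_SR_iff_DR_const: "is_eigvec_c (cmat (SR \<gamma> P)) v \<longleftrightarrow> is_eigvec_c (cmat DR_const) v"
  unfolding SR_affine DR_const_affine eigvec_c_matrix_inv_affine_iff[OF invertible_SR gamma_neq_0]
    eigvec_c_matrix_inv_affine_iff[OF invertible_DR_const one_neq_zero] ..

lemma eigpair_DR_const_iff:
  "is_eigpair DR_const v \<nu> \<longleftrightarrow> is_eigpair P v (c - inverse \<nu>)"
  unfolding DR_const_affine eigpair_matrix_inv_affine_iff[OF invertible_DR_const one_neq_zero]
  by simp

lemma eigpair_DR_const_iff_SR: "is_eigpair DR_const v \<nu> \<longleftrightarrow> is_eigpair (SR \<gamma> P) v (SR_eigenvalue \<nu>)"
proof -
  have "(1 - inverse (SR_eigenvalue \<nu>)) / \<gamma> = c - inverse \<nu>"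
    using gamma_neq_0 unfolding SR_eigenvalue_def by (simp add: field_simps)
  then show ?thesis
    unfolding eigpair_DR_const_iff SR_affine eigpair_matrix_inv_affine_iff[OF invertible_SR gamma_neq_0]
    by simp
qed

lemma eigpair_SR_imp_DR_const:
  assumes "is_eigpair (SR \<gamma> P) v \<mu>"
  shows "\<exists>\<nu>. is_eigpair DR_const v \<nu> \<and> \<mu> = SR_eigenvalue \<nu>"
proof -
  define \<nu> where "\<nu> = inverse (c - (1 - inverse \<mu>) / \<gamma>)"
  have "\<gamma> * (inverse \<nu> - c + inverse \<gamma>) = inverse \<mu>"
    using gamma_neq_0 unfolding \<nu>_def by (simp add: field_simps)
  then have \<mu>: "\<mu> = SR_eigenvalue \<nu>"
    unfolding SR_eigenvalue_def by simp
  with assms have "is_eigpair DR_const v \<nu>"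
    unfolding eigpair_DR_const_iff_SR by simp
  with \<mu> show ?thesis by blast
qed

lemma eigenvalue_DR_const_bounds:
  assumes "is_eigpair DR_const v \<nu>"
  shows "0 < \<nu>" "c - inverse \<nu> \<le> 1"
proof -
  have "\<bar>c - inverse \<nu>\<bar> \<le> 1"
    using assms unfolding eigpair_DR_const_iff by (rule substochastic_eigenvalue_abs_le[OF substochastic])
  with c_gt_1 have "0 < inverse \<nu>" "c - inverse \<nu> \<le> 1" by linarith+
  then show "0 < \<nu>" "c - inverse \<nu> \<le> 1" by simp_all
qed

text \<open>\<open>SR_eigenvalue \<nu> = 1 / (1 - \<gamma>x)\<close> with \<open>x = c - 1/\<nu>\<close> an eigenvalue of \<open>P\<close>, so \<open>\<gamma>x < 1\<close>.\<close>

lemma SR_eigenvalue_strict_mono: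
  assumes "is_eigpair DR_const v1 \<nu>1" "is_eigpair DR_const v2 \<nu>2" "\<nu>1 < \<nu>2"
  shows "SR_eigenvalue \<nu>1 < SR_eigenvalue \<nu>2"
proof -
  have "\<gamma> * (inverse \<nu>2 - c + inverse \<gamma>) = 1 - \<gamma> * (c - inverse \<nu>2)"
    using gamma by (simp add: field_simps)
  also have "\<dots> > 0"
    using gamma mult_left_mono[OF eigenvalue_DR_const_bounds(2)[OF assms(2)], of \<gamma>] by linarith
  finally have pos: "\<gamma> * (inverse \<nu>2 - c + inverse \<gamma>) > 0" .
  have "inverse \<nu>2 < inverse \<nu>1"
    using eigenvalue_DR_const_bounds(1)[OF assms(1)] assms(3) by (simp add: less_imp_inverse_less)
  then have "\<gamma> * (inverse \<nu>2 - c + inverse \<gamma>) < \<gamma> * (inverse \<nu>1 - c + inverse \<gamma>)"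
    using gamma by simp
  then show ?thesis
    unfolding SR_eigenvalue_def using pos by (rule less_imp_inverse_less)
qed

end

theorem theorem3p1:
  fixes p :: "'s::finite \<Rightarrow> 'a::finite \<Rightarrow> 's \<Rightarrow> real"
    and T :: "'s set" and pol :: "'s \<Rightarrow> 'a \<Rightarrow> real"
    and r :: "'s \<Rightarrow> real" and \<gamma> lam :: real
  assumes p_dist: "\<And>s a. is_dist (p s a)"
    and pol_dist: "\<And>s. is_dist (pol s)"
    and pol_pos: "\<And>s a. pol s a > 0"
    and gamma: "0 < \<gamma>" "\<gamma> < 1"
    and lambda: "lam > 0"
    and r_const: "\<And>s s'. r s = r s'"
    and r_neg: "\<And>s. r s < 0"
  shows
    "(\<forall>v. is_eigvec_c (cmat (SR \<gamma> (trans_matrix p T pol))) v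
          \<longleftrightarrow> is_eigvec_c (cmat (DR lam r (trans_matrix p T pol))) v)
     \<and>
     ((transpose (SR \<gamma> (trans_matrix p T pol)) = SR \<gamma> (trans_matrix p T pol)
       \<and> transpose (DR lam r (trans_matrix p T pol)) = DR lam r (trans_matrix p T pol))
      \<longrightarrow>
      (\<forall>s v \<nu>. is_eigpair (DR lam r (trans_matrix p T pol)) v \<nu> \<longrightarrow>
          is_eigpair (SR \<gamma> (trans_matrix p T pol)) v
            (inverse (\<gamma> * (inverse \<nu> - exp (- r s / lam) + inverse \<gamma>))))
      \<and>
      (\<forall>s v \<mu>. is_eigpair (SR \<gamma> (trans_matrix p T pol)) v \<mu> \<longrightarrow>
          (\<exists>\<nu>. is_eigpair (DR lam r (trans_matrix p T pol)) v \<nu> \<and>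
                \<mu> = inverse (\<gamma> * (inverse \<nu> - exp (- r s / lam) + inverse \<gamma>))))
      \<and>
      (\<forall>s v1 v2 \<nu>1 \<nu>2. is_eigpair (DR lam r (trans_matrix p T pol)) v1 \<nu>1
          \<and> is_eigpair (DR lam r (trans_matrix p T pol)) v2 \<nu>2 \<and> \<nu>1 < \<nu>2 \<longrightarrow>
          inverse (\<gamma> * (inverse \<nu>1 - exp (- r s / lam) + inverse \<gamma>))
            < inverse (\<gamma> * (inverse \<nu>2 - exp (- r s / lam) + inverse \<gamma>))))"
proof -
  define c where "c = exp (- r undefined / lam)"
  have c_eq: "exp (- r s / lam) = c" for s
    unfolding c_def using r_const by metis
  have "1 < c"
    unfolding c_def using r_neg lambda by (simp add: divide_neg_pos)
  interpret substochastic_representations "trans_matrix p T pol" \<gamma> c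
    using substochastic_trans_matrix[OF p_dist pol_dist] gamma \<open>1 < c\<close>
    by unfold_locales auto
  show ?thesis
    unfolding c_eq DR_constant_reward[OF c_eq] SR_eigenvalue_def[symmetric]
    using eigvec_c_SR_iff_DR_const eigpair_DR_const_iff_SR[THEN iffD1]
      eigpair_SR_imp_DR_const SR_eigenvalue_strict_mono
    by (intro conjI impI allI; (elim conjE)?) simp_all
qed

end
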